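(* Let $k\ge2$ and $G=\mathrm{BS}(1,k)\cong\mathbb Z[\tfrac1k]\rtimes_\varphi\langle t\rangle$ with $\varphi(x)=kx$. Let $n\in\mathbb Z$ and let $A=\{(a_1,t^n),\dots,(a_r,t^n)\}\subseteq G$ be a finite set of $r$ distinct elements all with $t$-exponent sum $n$. Then there exist integers $N_1,N_2\ge0$ and a positive integer $L$ such that, with $g=t^{N_1}\,(L,1)\,t^{N_2}\in G$, the $r$ elements of $gA$ lie in pairwise distinct conjugacy classes of $G$, i.e. $c(gA)=|A|$.
   Context: Elements of $G$ are pairs $(x,t^m)$, $x\in\mathbb Z[1/k]$, with $(x,t^m)(x',t^{m'})=(x+k^mx',t^{m+m'})$; $t^m$ denotes $(0,t^m)$ and the $t$-exponent sum of $(x,t^m)$ is $m$. For $B\subseteq G$, $c(B)$ is the number of distinct conjugacy classes meeting $B$. *)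

theory Defs
  imports Complex_Main
begin

text \<open>The Baumslag--Solitar group BS(1,k) = Z[1/k] \<rtimes> <t>, elements (x, m) meaning (x, t^m).\<close>

definition Zk :: "int \<Rightarrow> rat set" where
  "Zk k = {x. \<exists>a::int. \<exists>j::nat. x = of_int a / (of_int k) ^ j}"

definition bs_carrier :: "int \<Rightarrow> (rat \<times> int) set" where
  "bs_carrier k = Zk k \<times> UNIV"

definition bs_mult :: "int \<Rightarrow> rat \<times> int \<Rightarrow> rat \<times> int \<Rightarrow> rat \<times> int" where
  "bs_mult k p q = (fst p + (of_int k) powi (snd p) * fst q, snd p + snd q)"

definition bs_inv :: "int \<Rightarrow> rat \<times> int \<Rightarrow> rat \<times> int" where
  "bs_inv k p = (- ((of_int k) powi (- snd p)) * fst p, - snd p)"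

definition bs_t :: "int \<Rightarrow> rat \<times> int" where
  "bs_t m = (0, m)"

definition bs_conj :: "int \<Rightarrow> rat \<times> int \<Rightarrow> rat \<times> int \<Rightarrow> bool" where
  "bs_conj k h h' \<longleftrightarrow> (\<exists>g \<in> bs_carrier k. bs_mult k (bs_mult k g h) (bs_inv k g) = h')"

definition bs_conjclass :: "int \<Rightarrow> rat \<times> int \<Rightarrow> (rat \<times> int) set" where
  "bs_conjclass k h = {h' \<in> bs_carrier k. bs_conj k h h'}"

definition bs_c :: "int \<Rightarrow> (rat \<times> int) set \<Rightarrow> nat" where
  "bs_c k B = card (bs_conjclass k ` B)"

end

theory Submission
  imports Defs "HOL-Number_Theory.Cong"
begin

text \<open>Clearing denominators and shifting by \<open>L\<close> turns the elements of \<open>A\<close> into integers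
  \<open>c\<^sub>1, \<dots>, c\<^sub>r\<close> from a window \<open>[lo, hi]\<close> with \<open>hi < k \<cdot> lo\<close>; left multiplication by a
  large power of \<open>t\<close> makes their common \<open>t\<close>-exponent \<open>M\<close> large. Two elements
  \<open>(k\<^sup>N c, t\<^sup>M)\<close>, \<open>(k\<^sup>N c', t\<^sup>M)\<close> are conjugate only if \<open>k\<^sup>u c \<equiv> k\<^sup>v c' (mod k\<^sup>M - 1)\<close>, i.e.
  \<open>c'\<close> is congruent to a cyclic digit rotation \<open>k\<^sup>r c\<close> of \<open>c\<close>. For \<open>0 < r \<le> M/2\<close> the
  number \<open>k\<^sup>r c - c'\<close> lies strictly between \<open>0\<close> and \<open>k\<^sup>M - 1\<close> (the window is too narrow
  to contain \<open>c'\<close> and \<open>k c\<close>), larger \<open>r\<close> are handled symmetrically, and \<open>r = 0\<close> forces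
  \<open>c = c'\<close>.\<close>

lemma cong_power_mod_period:
  fixes k :: int and M t :: nat
  shows "[k ^ t = k ^ (t mod M)] (mod k ^ M - 1)"
proof -
  have "[(k ^ M) ^ (t div M) * k ^ (t mod M) = 1 ^ (t div M) * k ^ (t mod M)] (mod k ^ M - 1)"
    by (intro cong_scalar_right cong_pow) (simp add: cong_iff_dvd_diff)
  moreover have "(k ^ M) ^ (t div M) * k ^ (t mod M) = k ^ t"
    by (metis div_mult_mod_eq mult.commute power_add power_mult)
  ultimately show ?thesis by simp
qed

lemma power_pred_le_power_minus_one:
  fixes k :: int
  assumes "k \<ge> 2" "M \<ge> 1"
  shows "k ^ (M - 1) \<le> k ^ M - 1"
proof -
  have "k ^ M = k * k ^ (M - 1)"
    using assms(2) by (metis Suc_diff_le diff_Suc_1 power_Suc)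
  moreover have "2 * k ^ (M - 1) \<le> k * k ^ (M - 1)"
    using assms(1) by (intro mult_right_mono) auto
  moreover have "k ^ (M - 1) \<ge> 1" using assms(1) by simp
  ultimately show ?thesis by linarith
qed

lemma not_dvd_rotation_in_window:
  fixes k D c c' lo hi :: int
  assumes "k \<ge> 2" "r \<ge> 1" "1 \<le> lo" "hi < k * lo"
    and "lo \<le> c" "c \<le> hi" "lo \<le> c'" "c' \<le> hi"
    and "k ^ r * hi \<le> D"
  shows "\<not> D dvd k ^ r * c - c'"
proof
  assume dvd: "D dvd k ^ r * c - c'"
  have "k * lo \<le> k ^ r * c"
    using assms self_le_power[of k r] by (intro mult_mono) auto
  then have pos: "0 < k ^ r * c - c'" using assms by linarith
  have "k ^ r * c \<le> k ^ r * hi" using assms by simp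
  then have "k ^ r * c - c' < D" using assms by linarith
  with zdvd_imp_le[OF dvd pos] show False by linarith
qed

text \<open>The hypothesis \<open>k\<^sup>M\<^sup>/\<^sup>2 \<cdot> hi \<le> k\<^sup>M - 1\<close> rules out \<open>M = 0\<close>, where the modulus vanishes.\<close>

lemma cong_rotation_in_window_eq:
  fixes k c c' lo hi :: int and M t :: nat
  assumes k: "k \<ge> 2" and window: "1 \<le> lo" "hi < k * lo"
    and c: "lo \<le> c" "c \<le> hi" "lo \<le> c'" "c' \<le> hi"
    and M: "k ^ (M div 2) * hi \<le> k ^ M - 1"
    and cong: "[k ^ t * c = c'] (mod k ^ M - 1)"
  shows "c = c'"
proof -
  define D where "D = k ^ M - 1"
  define r where "r = t mod M"
  have "M \<noteq> 0"
  proof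
    assume "M = 0"
    then show False using M window c by simp
  qed
  then have "r < M" by (simp add: r_def)
  have hi: "0 \<le> hi" using window c by linarith
  have small: "k ^ s * hi \<le> D" if "2 * s \<le> M" for s
  proof -
    have "k ^ s \<le> k ^ (M div 2)" using k that by (intro power_increasing) auto
    then have "k ^ s * hi \<le> k ^ (M div 2) * hi" using hi by (rule mult_right_mono)
    then show ?thesis using M by (simp add: D_def)
  qed
  have hi_le_D: "hi \<le> D" using small[of 0] by simp
  have "[k ^ t * c = k ^ r * c] (mod D)"
    unfolding D_def r_def by (intro cong_scalar_right cong_power_mod_period)
  then have rot: "[k ^ r * c = c'] (mod D)"
    using cong unfolding D_def by (metis cong_sym cong_trans)
  consider "r = 0" | "r \<ge> 1" "2 * r \<le> M" | "2 * r > M" by linarith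
  then show ?thesis
  proof cases
    case 1
    then have "D dvd c - c'" using rot by (simp add: cong_iff_dvd_diff)
    moreover have "\<bar>c - c'\<bar> < D" using c window hi_le_D by linarith
    ultimately show ?thesis using dvd_imp_le_int[of "c - c'" D] by (cases "c = c'") auto
  next
    case 2
    then have "D dvd k ^ r * c - c'" using rot by (simp add: cong_iff_dvd_diff)
    with not_dvd_rotation_in_window[OF k 2(1) window c small[OF 2(2)]] show ?thesis by blast
  next
    case 3
    have "[k ^ (M - r) * (k ^ r * c) = k ^ (M - r) * c'] (mod D)"
      using rot by (rule cong_scalar_left)
    moreover have "k ^ (M - r) * (k ^ r * c) = k ^ M * c"
      using \<open>r < M\<close> by (simp add: mult.assoc[symmetric] power_add[symmetric])
    moreover have "[k ^ M * c = c] (mod D)"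
      using cong_scalar_right[of "k ^ M" 1 D c] by (simp add: D_def cong_iff_dvd_diff)
    ultimately have "[k ^ (M - r) * c' = c] (mod D)" by (metis cong_sym cong_trans)
    then have "D dvd k ^ (M - r) * c' - c" by (simp add: cong_iff_dvd_diff)
    moreover have "M - r \<ge> 1" "2 * (M - r) \<le> M" using 3 \<open>r < M\<close> by auto
    ultimately show ?thesis
      using not_dvd_rotation_in_window[OF k _ window c(3,4,1,2) small] by blast
  qed
qed

lemma cong_powers_in_window_eq:
  fixes k c c' lo hi :: int and M u v :: nat
  assumes k: "k \<ge> 2" and window: "1 \<le> lo" "hi < k * lo"
    and c: "lo \<le> c" "c \<le> hi" "lo \<le> c'" "c' \<le> hi"
    and M: "k ^ (M div 2) * hi \<le> k ^ M - 1"
    and cong: "[k ^ u * c = k ^ v * c'] (mod k ^ M - 1)"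
  shows "c = c'"
proof -
  have "M \<noteq> 0"
  proof
    assume "M = 0"
    then show False using M window c by simp
  qed
  have coprime: "coprime (k ^ w) (k ^ M - 1)" for w
    using \<open>M \<noteq> 0\<close> coprime_power_left_iff[of k M "k ^ M - 1"] by simp
  show ?thesis
  proof (cases "v \<le> u")
    case True
    then have "[k ^ v * (k ^ (u - v) * c) = k ^ v * c'] (mod k ^ M - 1)"
      using cong by (simp add: mult.assoc[symmetric] power_add[symmetric])
    then have "[k ^ (u - v) * c = c'] (mod k ^ M - 1)"
      using cong_mult_lcancel[OF coprime] by blast
    then show ?thesis using cong_rotation_in_window_eq[OF k window c M] by blast
  next
    case False
    then have "[k ^ u * (k ^ (v - u) * c') = k ^ u * c] (mod k ^ M - 1)"
      using cong_sym[OF cong] by (simp add: mult.assoc[symmetric] power_add[symmetric])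
    then have "[k ^ (v - u) * c' = c] (mod k ^ M - 1)"
      using cong_mult_lcancel[OF coprime] by blast
    then show ?thesis using cong_rotation_in_window_eq[OF k window c(3,4,1,2) M] by metis
  qed
qed

lemma eventually_power_half_mult_le:
  fixes k hi :: int
  assumes "k \<ge> 2"
  shows "\<exists>M0. \<forall>M \<ge> M0. k ^ (M div 2) * hi \<le> k ^ M - 1"
proof -
  define m where "m = nat hi"
  have "int m < 2 ^ m"
    using less_exp[of m] by (metis of_nat_less_iff of_nat_numeral of_nat_power)
  then have "hi < 2 ^ m" unfolding m_def by linarith
  also have "\<dots> \<le> k ^ m" using assms by (intro power_mono) auto
  finally have hi: "hi < k ^ m" .
  have "k ^ (M div 2) * hi \<le> k ^ M - 1" if "M \<ge> 2 * m + 2" for M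
  proof -
    have "k ^ (M div 2) * hi \<le> k ^ (M div 2) * k ^ m"
      using hi assms by (intro mult_left_mono) auto
    also have "\<dots> = k ^ (M div 2 + m)" by (simp add: power_add)
    also have "\<dots> \<le> k ^ (M - 1)" using assms that by (intro power_increasing) auto
    also have "\<dots> \<le> k ^ M - 1"
      using assms that by (intro power_pred_le_power_minus_one) auto
    finally show ?thesis .
  qed
  then show ?thesis by blast
qed

lemma of_int_in_Zk: "of_int a \<in> Zk k"
  unfolding Zk_def by (auto intro!: exI[of _ a] exI[of _ "0::nat"])

lemma bs_conj_refl: "bs_conj k h h"
proof -
  have "(0, 0) \<in> bs_carrier k"
    using of_int_in_Zk[of 0 k] by (simp add: bs_carrier_def)
  then show ?thesis unfolding bs_conj_def bs_mult_def bs_inv_def by force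
qed

lemma bs_c_eq_card:
  assumes "B \<subseteq> bs_carrier k" and "\<And>h h'. h \<in> B \<Longrightarrow> h' \<in> B \<Longrightarrow> bs_conj k h h' \<Longrightarrow> h = h'"
  shows "bs_c k B = card B"
proof -
  have "inj_on (bs_conjclass k) B"
  proof
    fix h h' assume "h \<in> B" "h' \<in> B" "bs_conjclass k h = bs_conjclass k h'"
    then have "h' \<in> bs_conjclass k h"
      using assms(1) bs_conj_refl unfolding bs_conjclass_def by blast
    then show "h = h'" using assms(2) \<open>h \<in> B\<close> \<open>h' \<in> B\<close> unfolding bs_conjclass_def by blast
  qed
  then show ?thesis unfolding bs_c_def by (rule card_image)
qed

lemma bs_conjE:
  assumes "bs_conj k h h'" "k \<noteq> 0"
  obtains y s where "y \<in> Zk k" "snd h' = snd h"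
    "fst h' = of_int k powi s * fst h + y * (1 - of_int k powi snd h)"
proof -
  obtain y s where ys: "(y, s) \<in> bs_carrier k"
    "bs_mult k (bs_mult k (y, s) h) (bs_inv k (y, s)) = h'"
    using assms(1) unfolding bs_conj_def by auto
  define K where "K = (of_int k :: rat)"
  have "K \<noteq> 0" using assms(2) by (simp add: K_def)
  then have "K powi (s + snd h) * K powi (- s) = K powi snd h"
    by (simp add: power_int_add[symmetric])
  then have "fst h' = K powi s * fst h + y * (1 - K powi snd h)"
    using ys(2) unfolding bs_mult_def bs_inv_def K_def[symmetric]
    by (auto simp: algebra_simps)
  moreover have "snd h' = snd h" using ys(2) by (auto simp: bs_mult_def bs_inv_def)
  moreover have "y \<in> Zk k" using ys(1) by (simp add: bs_carrier_def)
  ultimately show ?thesis using that unfolding K_def by blast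
qed

text \<open>Multiplying the conjugation equation by a large power of \<open>k\<close> clears all denominators,
  including the negative powers coming from \<open>k\<^sup>s\<close>.\<close>

lemma conj_equation_imp_cong:
  fixes k c c' s :: int and M :: nat
  assumes "k \<noteq> 0" "y \<in> Zk k"
    and eq: "(of_int c' :: rat) = of_int k powi s * of_int c + y * (1 - of_int k ^ M)"
  shows "\<exists>u v. [k ^ u * c = k ^ v * c'] (mod k ^ M - 1)"
proof -
  define K where "K = (of_int k :: rat)"
  have K: "K \<noteq> 0" using assms(1) by (simp add: K_def)
  obtain a j where y: "y = of_int a / K ^ j" using assms(2) by (auto simp: Zk_def K_def)
  define E where "E = j + nat \<bar>s\<bar>"
  have shift: "K powi s * K ^ E = K ^ nat (s + int E)"
    using K by (simp add: E_def power_int_add[symmetric] flip: power_int_of_nat)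
  have clear: "y * K ^ E = of_int a * K ^ nat \<bar>s\<bar>"
    using K by (simp add: y E_def power_add)
  have "of_int c' * K ^ E = (K powi s * of_int c + y * (1 - K ^ M)) * K ^ E"
    using eq unfolding K_def[symmetric] by simp
  then have "of_int c' * K ^ E = (K powi s * K ^ E) * of_int c + (y * K ^ E) * (1 - K ^ M)"
    by (simp add: algebra_simps)
  then have "of_int c' * K ^ E = K ^ nat (s + int E) * of_int c + of_int a * K ^ nat \<bar>s\<bar> * (1 - K ^ M)"
    unfolding shift clear .
  then have "(of_int (k ^ E * c') :: rat)
      = of_int (k ^ nat (s + int E) * c + a * k ^ nat \<bar>s\<bar> * (1 - k ^ M))"
    unfolding K_def by (simp add: mult.commute)
  then have "k ^ E * c' = k ^ nat (s + int E) * c + a * k ^ nat \<bar>s\<bar> * (1 - k ^ M)"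
    by (simp only: of_int_eq_iff)
  then have "k ^ nat (s + int E) * c - k ^ E * c' = (k ^ M - 1) * (a * k ^ nat \<bar>s\<bar>)"
    by (simp add: algebra_simps)
  then show ?thesis by (metis cong_iff_dvd_diff dvd_triv_left)
qed

lemma bs_conj_in_window_eq:
  fixes k c c' lo hi :: int and N M :: nat
  assumes k: "k \<ge> 2" and window: "1 \<le> lo" "hi < k * lo"
    and c: "lo \<le> c" "c \<le> hi" "lo \<le> c'" "c' \<le> hi"
    and M: "k ^ (M div 2) * hi \<le> k ^ M - 1"
    and conj: "bs_conj k (of_int (k ^ N * c), int M) (of_int (k ^ N * c'), int M)"
  shows "c = c'"
proof -
  have "k \<noteq> 0" using k by simp
  then obtain y s where "y \<in> Zk k"
    "(of_int (k ^ N * c') :: rat) = of_int k powi s * of_int (k ^ N * c) + y * (1 - of_int k ^ M)"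
    using bs_conjE[OF conj] by auto
  then obtain u v where "[k ^ u * (k ^ N * c) = k ^ v * (k ^ N * c')] (mod k ^ M - 1)"
    using conj_equation_imp_cong[OF \<open>k \<noteq> 0\<close>] by blast
  then have "[k ^ (u + N) * c = k ^ (v + N) * c'] (mod k ^ M - 1)"
    by (simp add: power_add mult.assoc)
  then show ?thesis using cong_powers_in_window_eq[OF k window c M] by blast
qed

lemma bs_c_image_in_window:
  fixes c :: "'a \<Rightarrow> int" and k lo hi :: int and N M :: nat
  assumes k: "k \<ge> 2" and window: "1 \<le> lo" "hi < k * lo"
    and c: "\<And>a. a \<in> A \<Longrightarrow> lo \<le> c a" "\<And>a. a \<in> A \<Longrightarrow> c a \<le> hi" "inj_on c A"
    and M: "k ^ (M div 2) * hi \<le> k ^ M - 1"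
    and f: "\<And>a. a \<in> A \<Longrightarrow> f a = (of_int (k ^ N * c a), int M)"
  shows "bs_c k (f ` A) = card A"
proof -
  have conj_eq: "p = q" if pq: "p \<in> A" "q \<in> A" "bs_conj k (f p) (f q)" for p q
  proof -
    have "c p = c q"
      using bs_conj_in_window_eq[OF k window c(1,2)[OF pq(1)] c(1,2)[OF pq(2)] M] pq(3)
      unfolding f[OF pq(1)] f[OF pq(2)] by blast
    then show ?thesis using c(3) pq by (simp add: inj_on_eq_iff)
  qed
  have "f ` A \<subseteq> bs_carrier k"
    by (auto simp: f bs_carrier_def of_int_in_Zk simp del: of_int_mult)
  then have "bs_c k (f ` A) = card (f ` A)"
    using conj_eq by (intro bs_c_eq_card) blast+
  also have "\<dots> = card A"
    using conj_eq bs_conj_refl by (intro card_image inj_onI) metis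
  finally show ?thesis .
qed

lemma Zk_common_denominator:
  assumes "finite X" "X \<subseteq> Zk k" "k \<noteq> 0"
  shows "\<exists>N. \<forall>x\<in>X. \<exists>b::int. (of_int k :: rat) ^ N * x = of_int b"
  using assms
proof (induction X rule: finite_induct)
  case empty
  then show ?case by simp
next
  case (insert x X)
  then obtain N where N: "\<forall>x\<in>X. \<exists>b::int. (of_int k :: rat) ^ N * x = of_int b" by auto
  obtain a j where x: "x = of_int a / (of_int k) ^ j" using insert.prems unfolding Zk_def by auto
  have "(of_int k :: rat) ^ (N + j) * x = of_int (k ^ N * a)"
    using insert.prems by (simp add: x power_add)
  moreover have "\<exists>b::int. (of_int k :: rat) ^ (N + j) * z = of_int b" if z: "z \<in> X" for z
  proof -
    obtain b where "(of_int k :: rat) ^ N * z = of_int b" using N z by auto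
    then have "(of_int k :: rat) ^ (N + j) * z = of_int (k ^ j * b)"
      by (simp add: power_add algebra_simps)
    then show ?thesis by blast
  qed
  ultimately show ?case by blast
qed

lemma exists_shift_into_window:
  fixes b :: "'a \<Rightarrow> int"
  assumes "finite A"
  shows "\<exists>L lo hi. L > 0 \<and> 1 \<le> lo \<and> hi < 2 * lo \<and> (\<forall>a\<in>A. lo \<le> L + b a \<and> L + b a \<le> hi)"
proof -
  define C where "C = (\<Sum>a\<in>A. \<bar>b a\<bar>)"
  have "\<bar>b a\<bar> \<le> C" if "a \<in> A" for a
    unfolding C_def using assms that by (intro member_le_sum) auto
  moreover have "C \<ge> 0" unfolding C_def by (simp add: sum_nonneg)
  ultimately show ?thesis
    by (intro exI[of _ "3 * C + 1"] exI[of _ "2 * C + 1"] exI[of _ "4 * C + 1"]) force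
qed

lemma bs_mult_translate:
  "bs_mult k (bs_mult k (bs_mult k (bs_t (int N1)) (of_int L, 0)) (bs_t (int N2))) (x, n)
     = (of_int k ^ N1 * (of_int L + of_int k ^ N2 * x), int N1 + int N2 + n)"
proof -
  have "(of_int k :: rat) powi (int N1 + int N2) = of_int k ^ N1 * of_int k ^ N2"
    by (metis of_nat_add power_int_of_nat power_add)
  then show ?thesis by (simp add: bs_mult_def bs_t_def algebra_simps)
qed

theorem lemma5p3:
  fixes k n :: int and A :: "(rat \<times> int) set"
  assumes "k \<ge> 2"
    and "finite A"
    and "A \<subseteq> bs_carrier k"
    and "\<forall>a \<in> A. snd a = n"
  shows "\<exists>N1 N2 :: nat. \<exists>L :: int. L > 0 \<and>
           (let g = bs_mult k (bs_mult k (bs_t (int N1)) (of_int L, 0)) (bs_t (int N2))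
            in bs_c k (bs_mult k g ` A) = card A)"
proof -
  define K where "K = (of_int k :: rat)"
  have "finite (fst ` A)" "fst ` A \<subseteq> Zk k" using assms(2,3) by (auto simp: bs_carrier_def)
  then obtain N2 where "\<forall>x\<in>fst ` A. \<exists>b::int. K ^ N2 * x = of_int b"
    using Zk_common_denominator[of "fst ` A" k] assms(1) unfolding K_def by auto
  then obtain b where b: "\<forall>a\<in>A. K ^ N2 * fst a = of_int (b a)"
    using bchoice[of A "\<lambda>a b. K ^ N2 * fst a = of_int b"] by auto
  obtain L lo hi where L: "L > 0" and window: "1 \<le> lo" "hi < 2 * lo"
    and c: "\<And>a. a \<in> A \<Longrightarrow> lo \<le> L + b a" "\<And>a. a \<in> A \<Longrightarrow> L + b a \<le> hi"
    using exists_shift_into_window[OF assms(2), of b] by blast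
  have inj: "inj_on (\<lambda>a. L + b a) A"
  proof (rule inj_onI)
    fix p q assume "p \<in> A" "q \<in> A" "L + b p = L + b q"
    then have "K ^ N2 * fst p = K ^ N2 * fst q" using b by simp
    then show "p = q" using assms(1,4) \<open>p \<in> A\<close> \<open>q \<in> A\<close> by (simp add: K_def prod_eq_iff)
  qed
  have window_k: "hi < k * lo" using window assms(1) mult_right_mono[of 2 k lo] by linarith
  obtain M0 where M0: "\<And>M. M \<ge> M0 \<Longrightarrow> k ^ (M div 2) * hi \<le> k ^ M - 1"
    using eventually_power_half_mult_le[OF assms(1)] by blast
  define N1 where "N1 = M0 + nat \<bar>n\<bar>"
  define M where "M = nat (int N1 + int N2 + n)"
  define g where "g = bs_mult k (bs_mult k (bs_t (int N1)) (of_int L, 0)) (bs_t (int N2))"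
  have "bs_mult k g a = (of_int (k ^ N1 * (L + b a)), int M)" if "a \<in> A" for a
  proof -
    have "a = (fst a, n)" using assms(4) that by (simp add: prod_eq_iff)
    then show ?thesis using bs_mult_translate[of k N1 L N2 "fst a" n] b that
      by (simp add: g_def M_def N1_def K_def)
  qed
  moreover have "M \<ge> M0" by (simp add: M_def N1_def)
  ultimately have "bs_c k (bs_mult k g ` A) = card A"
    using bs_c_image_in_window[OF assms(1) window(1) window_k c inj M0] by blast
  with L show ?thesis unfolding g_def Let_def by blast
qed

end
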